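(* Let $\mathscr{A}$ be a $C^*$-algebra. Then the following are equivalent: (i) for all $a,b\in\mathscr{A}$, if $a\perp_B b$ then $\|a+b\|\geq\|b\|$; (ii) $\mathscr{A}$ is isomorphic to $\mathbb{C}$.
   Context: $a\perp_B b$ (Birkhoff--James orthogonality) means $\|a+\lambda b\|\ge\|a\|$ for all $\lambda\in\mathbb{C}$. *)

theory Defs
  imports Complex_Main
begin

text \<open>A (not necessarily unital) complex C*-algebra: a complete normed real algebra
  (associative, submultiplicative norm) carrying a compatible complex scalar
  multiplication and an involution satisfying the C*-identity.\<close>

class cstar_algebra = real_normed_algebra + banach +
  fixes cscale :: "complex \<Rightarrow> 'a \<Rightarrow> 'a"
    and cstar :: "'a \<Rightarrow> 'a"
  assumes scaleR_cscale: "scaleR r x = cscale (complex_of_real r) x"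
    and cscale_add_right: "cscale c (x + y) = cscale c x + cscale c y"
    and cscale_add_left: "cscale (c + d) x = cscale c x + cscale d x"
    and cscale_cscale: "cscale c (cscale d x) = cscale (c * d) x"
    and cscale_one: "cscale 1 x = x"
    and norm_cscale: "norm (cscale c x) = cmod c * norm x"
    and mult_cscale_left: "cscale c x * y = cscale c (x * y)"
    and mult_cscale_right: "x * cscale c y = cscale c (x * y)"
    and cstar_add: "cstar (x + y) = cstar x + cstar y"
    and cstar_cscale: "cstar (cscale c x) = cscale (cnj c) (cstar x)"
    and cstar_mult: "cstar (x * y) = cstar y * cstar x"
    and cstar_cstar: "cstar (cstar x) = x"
    and cstar_identity: "norm (cstar x * x) = (norm x)\<^sup>2"

definition bj_orth :: "'a::cstar_algebra \<Rightarrow> 'a \<Rightarrow> bool" where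
  "bj_orth a b \<longleftrightarrow> (\<forall>l::complex. norm (a + cscale l b) \<ge> norm a)"

definition star_iso_to_complex :: "('a::cstar_algebra \<Rightarrow> complex) \<Rightarrow> bool" where
  "star_iso_to_complex \<phi> \<longleftrightarrow> bij \<phi>
     \<and> (\<forall>x y. \<phi> (x + y) = \<phi> x + \<phi> y)
     \<and> (\<forall>c x. \<phi> (cscale c x) = c * \<phi> x)
     \<and> (\<forall>x y. \<phi> (x * y) = \<phi> x * \<phi> y)
     \<and> (\<forall>x. \<phi> (cstar x) = cnj (\<phi> x))"

end

theory Submission
  imports Defs "HOL-Analysis.Analysis"
begin

text \<open>Assume (i). If \<open>x, y\<close> are commuting self-adjoint elements of norm one with
  \<open>\<parallel>xy\<parallel>\<close> tiny, the norm of \<open>\<alpha>x + \<beta>y\<close> is almost \<open>max |\<alpha>| |\<beta>|\<close>, and the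
  line through \<open>x + y\<close> in direction \<open>y - 3x\<close> violates (i) at its point nearest to
  \<open>0\<close>, which is BJ-orthogonal to the direction. For self-adjoint \<open>h\<close> of norm one and
  \<open>d = \<surd>(1 - h\<^sup>2)\<close>, expanding \<open>(u\<^sup>2 + 1)\<^sup>n(u\<^sup>2 - 1)\<close> for the unitary \<open>u = h + id\<close>
  gives \<open>\<parallel>h\<^sup>nd\<parallel> \<le> (n choose n/2)/2\<^sup>n\<close>, so \<open>h\<^sup>2\<^sup>K\<close> and \<open>hd\<close> would be such a pair
  unless \<open>hd = 0\<close>. Hence \<open>h\<^sup>3 = h\<close>, and then the pair \<open>(h\<^sup>2 \<plusminus> h)/2\<close> forces
  \<open>h\<^sup>2 = \<plusminus>h\<close>. So every self-adjoint element is a real multiple of a projection,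
  two nonzero projections coincide, and the algebra is \<open>\<complex>e\<close>. Conversely, in \<open>\<complex>\<close>
  only \<open>0\<close> is BJ-orthogonal to a nonzero element.\<close>

lemma cscale_zero_right [simp]: "cscale c (0::'a::cstar_algebra) = 0"
  using cscale_add_right[of c "0::'a" 0] by simp

lemma cscale_zero_left [simp]: "cscale 0 (x::'a::cstar_algebra) = 0"
  using cscale_add_left[of 0 0 x] by simp

lemma cscale_minus_right: "cscale c (- x) = - cscale c (x::'a::cstar_algebra)"
  using cscale_add_right[of c "- x" x] by (simp add: eq_neg_iff_add_eq_0)

lemma cscale_minus_left: "cscale (- c) x = - cscale c (x::'a::cstar_algebra)"
  using cscale_add_left[of "- c" c x] by (simp add: eq_neg_iff_add_eq_0)

lemma cscale_diff_right: "cscale c (x - y) = cscale c x - cscale c (y::'a::cstar_algebra)"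
  unfolding diff_conv_add_uminus by (simp only: cscale_add_right cscale_minus_right)

lemma cscale_diff_left: "cscale (c - d) x = cscale c x - cscale d (x::'a::cstar_algebra)"
  unfolding diff_conv_add_uminus by (simp only: cscale_add_left cscale_minus_left)

lemma cscale_of_real: "cscale (complex_of_real r) x = r *\<^sub>R (x::'a::cstar_algebra)"
  by (simp add: scaleR_cscale)

lemma cscale_scaleR: "cscale c (r *\<^sub>R x) = r *\<^sub>R cscale c (x::'a::cstar_algebra)"
  by (simp add: scaleR_cscale cscale_cscale mult.commute)

lemma cscale_ii_ii: "cscale \<i> (cscale \<i> x) = - (x::'a::cstar_algebra)"
  by (simp add: cscale_cscale cscale_minus_left cscale_one)

lemma cscale_mult_cscale:
  "cscale c x * cscale d y = cscale (c * d) (x * (y::'a::cstar_algebra))"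
  by (simp add: mult_cscale_left mult_cscale_right cscale_cscale mult.commute)

lemma bounded_linear_cscale_left: "bounded_linear (\<lambda>c. cscale c (x::'a::cstar_algebra))"
proof (rule bounded_linear_intro[of _ "norm x"])
  show "cscale (r *\<^sub>R c) x = r *\<^sub>R cscale c x" for r c
    by (simp add: scaleR_conv_of_real scaleR_cscale cscale_cscale)
qed (simp_all add: cscale_add_left norm_cscale)

lemma cstar_zero [simp]: "cstar (0::'a::cstar_algebra) = 0"
  using cstar_add[of "0::'a" 0] by simp

lemma cstar_minus: "cstar (- x) = - cstar (x::'a::cstar_algebra)"
  using cstar_add[of "- x" x] by (simp add: eq_neg_iff_add_eq_0)

lemma cstar_diff: "cstar (x - y) = cstar x - cstar (y::'a::cstar_algebra)"
  unfolding diff_conv_add_uminus by (simp only: cstar_add cstar_minus)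

lemma cstar_scaleR: "cstar (r *\<^sub>R x) = r *\<^sub>R cstar (x::'a::cstar_algebra)"
  by (simp add: scaleR_cscale cstar_cscale)

lemma cstar_cscale_ii: "cstar (cscale \<i> x) = - cscale \<i> (cstar (x::'a::cstar_algebra))"
  by (simp add: cstar_cscale cscale_minus_left)

lemma norm_le_norm_cstar: "norm (x::'a::cstar_algebra) \<le> norm (cstar x)"
proof (cases "x = 0")
  case False
  have "norm x * norm x = norm (cstar x * x)" by (simp add: cstar_identity power2_eq_square)
  also have "\<dots> \<le> norm (cstar x) * norm x" by (rule norm_mult_ineq)
  finally show ?thesis using False by simp
qed simp

lemma norm_cstar [simp]: "norm (cstar x) = norm (x::'a::cstar_algebra)"
  by (metis antisym cstar_cstar norm_le_norm_cstar)

lemma bounded_linear_cstar: "bounded_linear (cstar :: 'a::cstar_algebra \<Rightarrow> 'a)"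
  by (rule bounded_linear_intro[of _ 1]) (simp_all add: cstar_add cstar_scaleR)

lemma norm_mult_self_selfadjoint:
  "cstar h = h \<Longrightarrow> norm (h * h) = (norm (h::'a::cstar_algebra))\<^sup>2"
  by (metis cstar_identity)

text \<open>\<open>spow h n\<close> is \<open>h\<^sup>n\<^sup>+\<^sup>1\<close>: the algebra need not have a unit.\<close>

fun spow :: "'a::times \<Rightarrow> nat \<Rightarrow> 'a" where
  "spow h 0 = h"
| "spow h (Suc n) = h * spow h n"

lemma spow_add: "spow h (Suc (m + n)) = spow h m * spow (h::'a::semigroup_mult) n"
  by (induction m) (simp_all add: mult.assoc)

lemma spow_eq_funpow: "spow h k * w = ((*) h ^^ Suc k) (w::'a::semigroup_mult)"
  by (induction k) (simp_all add: mult.assoc)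

lemma spow_commute: "z * h = h * z \<Longrightarrow> z * spow h n = spow h n * (z::'a::semigroup_mult)"
  by (induction n) (simp_all, metis mult.assoc)

lemma norm_spow_le: "norm (spow h n) \<le> norm (h::'a::real_normed_algebra) ^ Suc n"
proof (induction n)
  case (Suc n)
  have "norm (spow h (Suc n)) \<le> norm h * norm (spow h n)" by (simp add: norm_mult_ineq)
  also have "\<dots> \<le> norm h * norm h ^ Suc n" using Suc by (simp add: mult_left_mono)
  finally show ?case by simp
qed simp

lemma norm_spow_le_1: "norm (h::'a::real_normed_algebra) \<le> 1 \<Longrightarrow> norm (spow h n) \<le> 1"
  by (meson norm_ge_zero norm_spow_le order_trans power_le_one)

lemma cstar_spow: "cstar h = h \<Longrightarrow> cstar (spow h n) = spow (h::'a::cstar_algebra) n"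
  by (induction n) (simp_all add: cstar_mult spow_commute[of h h])

lemma norm_spow_double_selfadjoint:
  "cstar h = h \<Longrightarrow> norm (spow h (Suc (n + n))) = (norm (spow (h::'a::cstar_algebra) n))\<^sup>2"
  by (simp only: spow_add) (rule norm_mult_self_selfadjoint[OF cstar_spow])

lemma norm_spow_selfadjoint_pow2:
  assumes "cstar h = (h::'a::cstar_algebra)"
  shows "norm (spow h (2 ^ k - 1)) = norm h ^ 2 ^ k"
proof (induction k)
  case (Suc k)
  have "2 ^ Suc k - 1 = Suc ((2 ^ k - 1) + (2 ^ k - 1))"
    using one_le_power[of "2::nat" k] by (simp only: power_Suc) arith
  then show ?case
    using norm_spow_double_selfadjoint[OF assms, of "2 ^ k - 1"] Suc
    by (simp add: power_mult[symmetric] mult.commute)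
qed simp

text \<open>\<open>\<parallel>h\<^sup>2\<^sup>n\<^sup>+\<^sup>2\<parallel> = \<parallel>h\<^sup>n\<^sup>+\<^sup>1\<parallel>\<^sup>2 = 1\<close> and \<open>h\<^sup>2\<^sup>n\<^sup>+\<^sup>2 = h\<^sup>n\<^sup>+\<^sup>2 h\<^sup>n\<close> force \<open>\<parallel>h\<^sup>n\<^sup>+\<^sup>2\<parallel> \<ge> 1\<close>.\<close>

lemma norm_spow_selfadjoint:
  assumes sa: "cstar h = h" and nh: "norm (h::'a::cstar_algebra) = 1"
  shows "norm (spow h n) = 1"
proof (induction n)
  case (Suc n)
  have sq: "norm (spow h (Suc (n + n))) = 1"
    using Suc norm_spow_double_selfadjoint[OF sa] by simp
  show ?case
  proof (cases n)
    case (Suc m)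
    have "spow h (Suc (n + n)) = spow h (Suc n) * spow h m"
      using spow_add[of h "Suc n" m] Suc by simp
    then have "1 \<le> norm (spow h (Suc n)) * norm (spow h m)"
      using sq norm_mult_ineq by metis
    also have "\<dots> \<le> norm (spow h (Suc n))"
      using norm_spow_le_1[of h m] nh by (simp add: mult_left_le)
    finally show ?thesis using norm_spow_le_1[of h "Suc n"] nh by simp
  qed (use sq in simp)
qed (use nh in simp)

section \<open>A square root of \<open>1 - h\<^sup>2\<close> without a unit\<close>

text \<open>The limit \<open>s\<close> of this iteration satisfies \<open>2s = h\<^sup>2 + s\<^sup>2\<close>, that is
  \<open>(1 - s)\<^sup>2 = 1 - h\<^sup>2\<close> in the unitization; so \<open>1 - s\<close> plays the role of
  \<open>\<surd>(1 - h\<^sup>2)\<close>. For \<open>h = 1\<close> in \<open>\<real>\<close> the iteration majorizes the general one.\<close>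

primrec sqrt_compl_iter :: "'a::real_normed_algebra \<Rightarrow> nat \<Rightarrow> 'a" where
  "sqrt_compl_iter h 0 = 0"
| "sqrt_compl_iter h (Suc n) =
     (1/2) *\<^sub>R (h * h + sqrt_compl_iter h n * sqrt_compl_iter h n)"

declare sqrt_compl_iter.simps(2) [simp del]

abbreviation sqrt_compl_majorant :: "nat \<Rightarrow> real" where
  "sqrt_compl_majorant \<equiv> sqrt_compl_iter 1"

lemma sqrt_compl_majorant_bounds: "0 \<le> sqrt_compl_majorant n \<and> sqrt_compl_majorant n \<le> 1"
  by (induction n) (simp_all add: sqrt_compl_iter.simps(2) mult_le_one)

lemma sqrt_compl_majorant_mono: "sqrt_compl_majorant n \<le> sqrt_compl_majorant (Suc n)"
proof (induction n)
  case (Suc n)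
  have "sqrt_compl_majorant n * sqrt_compl_majorant n
      \<le> sqrt_compl_majorant (Suc n) * sqrt_compl_majorant (Suc n)"
    using Suc sqrt_compl_majorant_bounds[of n] by (intro mult_mono) auto
  then show ?case
    by (simp add: sqrt_compl_iter.simps(2)[of 1 "Suc n"] sqrt_compl_iter.simps(2)[of 1 n])
qed (simp add: sqrt_compl_iter.simps(2))

lemma sqrt_compl_iter_commute:
  "z * h = h * z \<Longrightarrow> z * sqrt_compl_iter h n = sqrt_compl_iter h n * z"
proof (induction n)
  case (Suc n)
  have "z * (h * h) = (h * h) * z" using Suc.prems by (metis mult.assoc)
  moreover have "z * (sqrt_compl_iter h n * sqrt_compl_iter h n)
      = (sqrt_compl_iter h n * sqrt_compl_iter h n) * z"
    using Suc by (metis mult.assoc)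
  ultimately show ?case by (simp add: sqrt_compl_iter.simps(2) distrib_left distrib_right)
qed simp

lemma sqrt_compl_iter_commute_iter:
  "sqrt_compl_iter h m * sqrt_compl_iter h n = sqrt_compl_iter h n * sqrt_compl_iter h m"
  by (intro sqrt_compl_iter_commute) (simp add: sqrt_compl_iter_commute)

text \<open>Since \<open>s\<^sub>n\<^sub>+\<^sub>2 - s\<^sub>n\<^sub>+\<^sub>1 = (s\<^sub>n\<^sub>+\<^sub>1 - s\<^sub>n)(s\<^sub>n\<^sub>+\<^sub>1 + s\<^sub>n)/2\<close>, the norms of the
  iterates and of their increments are dominated by the real iteration.\<close>

lemma sqrt_compl_iter_dominated:
  assumes nh: "norm h \<le> 1"
  shows "norm (sqrt_compl_iter h n) \<le> sqrt_compl_majorant n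
    \<and> norm (sqrt_compl_iter h (Suc n) - sqrt_compl_iter h n)
        \<le> sqrt_compl_majorant (Suc n) - sqrt_compl_majorant n"
proof (induction n)
  case 0
  have "norm (h * h) \<le> 1"
    using nh norm_mult_ineq[of h h] by (meson mult_le_one norm_ge_zero order_trans)
  then show ?case by (simp add: sqrt_compl_iter.simps(2))
next
  case (Suc n)
  let ?X = "sqrt_compl_iter h (Suc n)" and ?Y = "sqrt_compl_iter h n"
  let ?x = "sqrt_compl_majorant (Suc n)" and ?y = "sqrt_compl_majorant n"
  have nY: "norm ?Y \<le> ?y" and d: "norm (?X - ?Y) \<le> ?x - ?y" using Suc by simp_all
  have nX: "norm ?X \<le> ?x" using nY d norm_triangle_ineq[of "?X - ?Y" ?Y] by simp
  have "(?X - ?Y) * (?X + ?Y) = ?X * ?X - ?Y * ?Y"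
    using sqrt_compl_iter_commute_iter[of h "Suc n" n] by (simp add: algebra_simps)
  moreover have "sqrt_compl_iter h (Suc (Suc n)) - ?X = (1/2) *\<^sub>R (?X * ?X - ?Y * ?Y)"
    by (simp only: sqrt_compl_iter.simps(2)) (simp add: algebra_simps)
  ultimately have step: "sqrt_compl_iter h (Suc (Suc n)) - ?X = (1/2) *\<^sub>R ((?X - ?Y) * (?X + ?Y))"
    by simp
  have "norm ((?X - ?Y) * (?X + ?Y)) \<le> norm (?X - ?Y) * norm (?X + ?Y)"
    by (rule norm_mult_ineq)
  also have "\<dots> \<le> (?x - ?y) * (?x + ?y)"
    using d nX nY norm_triangle_ineq[of ?X ?Y] sqrt_compl_majorant_mono[of n]
    by (intro mult_mono) auto
  finally have "norm ((?X - ?Y) * (?X + ?Y)) \<le> ?x * ?x - ?y * ?y"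
    by (simp add: algebra_simps)
  then have "norm (sqrt_compl_iter h (Suc (Suc n)) - ?X) \<le> (?x * ?x - ?y * ?y) / 2"
    unfolding step by simp
  also have "\<dots> = sqrt_compl_majorant (Suc (Suc n)) - ?x"
    by (simp add: sqrt_compl_iter.simps(2)[of 1 "Suc n"] sqrt_compl_iter.simps(2)[of 1 n]
        field_simps)
  finally show ?case using nX by simp
qed

lemma convergent_sqrt_compl_iter:
  fixes h :: "'a::{real_normed_algebra,banach}"
  assumes nh: "norm h \<le> 1"
  shows "convergent (sqrt_compl_iter h)"
proof -
  have "convergent sqrt_compl_majorant"
  proof (rule Bseq_mono_convergent)
    show "Bseq sqrt_compl_majorant"
      by (rule BseqI'[of _ 1]) (use sqrt_compl_majorant_bounds in simp)
    show "\<forall>m n. m \<le> n \<longrightarrow> sqrt_compl_majorant m \<le> sqrt_compl_majorant n"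
      using lift_Suc_mono_le[of sqrt_compl_majorant, OF sqrt_compl_majorant_mono] by blast
  qed
  then have "summable (\<lambda>n. sqrt_compl_majorant (Suc n) - sqrt_compl_majorant n)"
    by (auto simp: convergent_def intro: telescope_summable)
  then have "summable (\<lambda>n. sqrt_compl_iter h (Suc n) - sqrt_compl_iter h n)"
    by (rule summable_comparison_test') (use sqrt_compl_iter_dominated[OF nh] in blast)
  then have "(\<lambda>n. \<Sum>i<n. sqrt_compl_iter h (Suc i) - sqrt_compl_iter h i) \<longlonglongrightarrow>
      (\<Sum>i. sqrt_compl_iter h (Suc i) - sqrt_compl_iter h i)"
    by (rule summable_LIMSEQ)
  then show ?thesis by (auto simp: sum_lessThan_telescope convergent_def)
qed

lemma sqrt_compl_exists:
  fixes h :: "'a::cstar_algebra"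
  assumes sa: "cstar h = h" and nh: "norm h \<le> 1"
  shows "\<exists>s. s + s = h * h + s * s \<and> cstar s = s \<and> s * h = h * s"
proof -
  obtain s where lim: "sqrt_compl_iter h \<longlonglongrightarrow> s"
    using convergent_sqrt_compl_iter[OF nh] by (auto simp: convergent_def)
  have "(\<lambda>n. sqrt_compl_iter h (Suc n)) \<longlonglongrightarrow> (1/2) *\<^sub>R (h * h + s * s)"
    unfolding sqrt_compl_iter.simps(2) by (intro tendsto_intros lim)
  then have "s = (1/2) *\<^sub>R (h * h + s * s)"
    using LIMSEQ_Suc[OF lim] LIMSEQ_unique by blast
  then have "s + s = 2 *\<^sub>R ((1/2) *\<^sub>R (h * h + s * s))"
    by (metis scaleR_2)
  then have fixpoint: "s + s = h * h + s * s"
    by simp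
  have "cstar (sqrt_compl_iter h n) = sqrt_compl_iter h n" for n
    using sa by (induction n) (simp_all add: sqrt_compl_iter.simps(2) cstar_scaleR cstar_add cstar_mult)
  then have "sqrt_compl_iter h \<longlonglongrightarrow> cstar s"
    using bounded_linear.tendsto[OF bounded_linear_cstar lim] by simp
  then have sa_s: "cstar s = s"
    using lim LIMSEQ_unique by blast
  have "(\<lambda>n. sqrt_compl_iter h n * h) \<longlonglongrightarrow> s * h"
    by (intro tendsto_intros lim)
  moreover have "(\<lambda>n. sqrt_compl_iter h n * h) \<longlonglongrightarrow> h * s"
    unfolding sqrt_compl_iter_commute[of h h, OF refl, symmetric] by (intro tendsto_intros lim)
  ultimately have "s * h = h * s"
    by (rule LIMSEQ_unique)
  with fixpoint sa_s show ?thesis by blast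
qed

lemma sum_abs_diff_binomial:
  "1 + (\<Sum>i<N. \<bar>real (n choose i) - real (n choose Suc i)\<bar>)
     = (if N \<le> n div 2 then real (n choose N)
        else 2 * real (n choose (n div 2)) - real (n choose N))"
proof (induction N)
  case (Suc N)
  show ?case
  proof (cases "Suc N \<le> n div 2")
    case True
    then have "real (n choose N) \<le> real (n choose Suc N)"
      by (simp add: binomial_mono)
    with Suc True show ?thesis by simp
  next
    case False
    then have "real (n choose Suc N) \<le> real (n choose N)"
      by (cases "Suc N \<le> n") (simp_all add: binomial_antimono binomial_eq_0)
    with Suc False show ?thesis
      by (cases "N = n div 2") simp_all
  qed
qed simp

lemma central_binomial_sq_le: "(real ((2*K) choose K))\<^sup>2 * (2 * real K + 1) \<le> 16 ^ K"
proof (induction K)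
  case (Suc K)
  let ?c = "real ((2*K) choose K)" and ?c' = "real ((2 * Suc K) choose Suc K)"
  have r1: "Suc K * (Suc (Suc (2*K)) choose Suc K) = Suc (Suc (2*K)) * (Suc (2*K) choose K)"
    and r2: "Suc K * (Suc (2*K) choose Suc K) = Suc (2*K) * ((2*K) choose K)"
    by (rule Suc_times_binomial)+
  have "Suc (2*K) choose K = Suc (2*K) choose Suc K"
    using binomial_symmetric[of K "Suc (2*K)"] by simp
  then have r2': "real (Suc K) * real (Suc (2*K) choose K) = real (Suc (2*K)) * ?c"
    using arg_cong[OF r2, of real] by (simp only: of_nat_mult)
  have r1': "real (Suc K) * ?c' = real (Suc (Suc (2*K))) * real (Suc (2*K) choose K)"
    using arg_cong[OF r1, of real] by (simp only: of_nat_mult mult_2 add_Suc_right add_Suc)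
  have "real (Suc K) * (real (Suc K) * ?c')
      = real (Suc (Suc (2*K))) * (real (Suc K) * real (Suc (2*K) choose K))"
    unfolding r1' by (simp add: algebra_simps)
  also have "\<dots> = real (Suc K) * (2 * (2 * real K + 1) * ?c)"
    unfolding r2' by (simp add: algebra_simps)
  finally have "real (Suc K) * ?c' = 2 * (2 * real K + 1) * ?c"
    by simp
  then have c': "?c' = 2 * (2 * real K + 1) / (real K + 1) * ?c"
    by (simp add: field_simps)
  have "?c'\<^sup>2 * (2 * real (Suc K) + 1)
      = 4 * (2 * real K + 1) * (2 * real K + 3) / (real K + 1)\<^sup>2 * (?c\<^sup>2 * (2 * real K + 1))"
    unfolding c' by (simp add: field_simps power2_eq_square)
  also have "\<dots> \<le> 4 * (2 * real K + 1) * (2 * real K + 3) / (real K + 1)\<^sup>2 * 16 ^ K"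
    by (rule mult_left_mono[OF Suc]) simp
  also have "\<dots> \<le> 16 * 16 ^ K"
  proof (rule mult_right_mono)
    have "4 * (2 * real K + 1) * (2 * real K + 3) \<le> 16 * (real K + 1)\<^sup>2"
      by (simp add: power2_eq_square algebra_simps)
    then show "4 * (2 * real K + 1) * (2 * real K + 3) / (real K + 1)\<^sup>2 \<le> 16"
      by (simp add: divide_le_eq)
  qed simp
  finally show ?case by simp
qed simp

lemma central_binomial_div_4_power_small:
  assumes d: "d > 0"
  shows "\<exists>K. K \<ge> 1 \<and> real ((2*K) choose K) / 4 ^ K < d"
proof -
  obtain K :: nat where K: "(1/d)\<^sup>2 < real K" using reals_Archimedean2 by blast
  have K1: "K \<ge> 1" using K d by (cases K) auto
  define c where "c = real ((2*K) choose K) / 4 ^ K"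
  have "(real ((2*K) choose K))\<^sup>2 * (2 * real K + 1) \<le> ((4::real) ^ K)\<^sup>2"
    using central_binomial_sq_le[of K] by (simp add: power2_eq_square flip: power_mult_distrib)
  then have c2: "c\<^sup>2 * (2 * real K + 1) \<le> 1"
    unfolding c_def by (simp add: power_divide divide_le_eq)
  have "c\<^sup>2 * (1/d)\<^sup>2 < 1"
  proof (cases "c = 0")
    case False
    then have "c\<^sup>2 * (1/d)\<^sup>2 < c\<^sup>2 * (2 * real K + 1)"
      using K by (intro mult_strict_left_mono) auto
    with c2 show ?thesis by linarith
  qed simp
  then have "(c / d)\<^sup>2 < 1\<^sup>2"
    by (simp add: power_divide power_mult_distrib)
  then have "c / d < 1" by (rule power_less_imp_less_base) simp
  then show ?thesis using K1 d unfolding c_def by (intro exI[of _ K]) (simp add: divide_less_eq mult.commute)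
qed

section \<open>The unitary \<open>h + i\<surd>(1 - h\<^sup>2)\<close>\<close>

text \<open>\<open>Qiter f n = (f\<^sup>2 + 1)\<^sup>n \<circ> (f\<^sup>2 - 1)\<close>, and \<open>Qcoeff n j\<close> is the coefficient of
  \<open>z\<^sup>j\<close> in \<open>(z + 1)\<^sup>n (z - 1)\<close>.\<close>

primrec Qiter :: "('a::ab_group_add \<Rightarrow> 'a) \<Rightarrow> nat \<Rightarrow> 'a \<Rightarrow> 'a" where
  "Qiter f 0 w = f (f w) - w"
| "Qiter f (Suc n) w = f (f (Qiter f n w)) + Qiter f n w"

fun Qcoeff :: "nat \<Rightarrow> nat \<Rightarrow> real" where
  "Qcoeff n 0 = -1"
| "Qcoeff n (Suc j) = real (n choose j) - real (n choose Suc j)"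

lemma Qcoeff_Suc_Suc: "Qcoeff (Suc n) (Suc j) = Qcoeff n j + Qcoeff n (Suc j)"
  by (cases j) simp_all

lemma Qcoeff_eq_0: "n + 1 < j \<Longrightarrow> Qcoeff n j = 0"
  by (cases j) (simp_all add: binomial_eq_0)

lemma sum_abs_Qcoeff: "(\<Sum>j\<le>Suc n. \<bar>Qcoeff n j\<bar>) = 2 * real (n choose (n div 2))"
proof -
  have "(\<Sum>j\<le>Suc n. \<bar>Qcoeff n j\<bar>) = \<bar>Qcoeff n 0\<bar> + (\<Sum>j\<le>n. \<bar>Qcoeff n (Suc j)\<bar>)"
    by (rule sum.atMost_Suc_shift)
  also have "\<dots> = 1 + (\<Sum>i<Suc n. \<bar>real (n choose i) - real (n choose Suc i)\<bar>)"
    by (simp add: lessThan_Suc_atMost)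
  also have "\<dots> = 2 * real (n choose (n div 2))"
    by (subst sum_abs_diff_binomial) (simp add: binomial_eq_0)
  finally show ?thesis .
qed

text \<open>In the unitization, \<open>d = 1 - s\<close> is a square root of \<open>1 - h\<^sup>2\<close> commuting
  with \<open>h\<close>, and \<open>U\<close> is left multiplication by the unitary \<open>u = h + i d\<close>.
  From \<open>u\<^sup>2 + 1 = 2hu\<close> and \<open>u\<^sup>2 - 1 = 2idu\<close> one gets
  \<open>(u\<^sup>2 + 1)\<^sup>n (u\<^sup>2 - 1) = 2\<^sup>n\<^sup>+\<^sup>1 i u\<^sup>n\<^sup>+\<^sup>1 h\<^sup>n d\<close>, so \<open>\<parallel>h\<^sup>n d\<parallel>\<close> is at most
  \<open>2\<^sup>-\<^sup>n\<^sup>-\<^sup>1\<close> times the sum of the absolute coefficients of \<open>(z + 1)\<^sup>n (z - 1)\<close>.\<close>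

locale sqrt_compl =
  fixes h s :: "'a::cstar_algebra"
  assumes h_selfadjoint: "cstar h = h" and s_selfadjoint: "cstar s = s"
    and s_commute: "s * h = h * s" and s_fixpoint: "s + s = h * h + s * s"
begin

definition D :: "'a \<Rightarrow> 'a" where "D w = w - s * w"

definition U :: "'a \<Rightarrow> 'a" where "U w = h * w + cscale \<i> (D w)"

lemma D_add: "D (x + y) = D x + D y"
  unfolding D_def by (simp add: algebra_simps)

lemma D_scaleR: "D (r *\<^sub>R x) = r *\<^sub>R D x"
  unfolding D_def by (simp add: algebra_simps)

lemma D_cscale_ii: "D (cscale \<i> x) = cscale \<i> (D x)"
  unfolding D_def by (simp add: cscale_diff_right mult_cscale_right)

lemma D_mult_h: "D (h * x) = h * D x"
proof -
  have "s * (h * x) = h * (s * x)" by (metis mult.assoc s_commute)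
  then show ?thesis unfolding D_def by (simp add: right_diff_distrib)
qed

lemma h_sq_plus_D_sq: "h * (h * w) + D (D w) = w"
proof -
  have "h * (h * w) + s * (s * w) = s * w + s * w"
    using s_fixpoint by (metis distrib_right mult.assoc)
  then show ?thesis unfolding D_def by (simp add: algebra_simps)
qed

lemma U_add: "U (x + y) = U x + U y"
  unfolding U_def by (simp add: D_add distrib_left cscale_add_right)

lemma U_scaleR: "U (r *\<^sub>R x) = r *\<^sub>R U x"
  unfolding U_def by (simp add: D_scaleR cscale_scaleR scaleR_right_distrib)

lemma U_cscale_ii: "U (cscale \<i> x) = cscale \<i> (U x)"
  unfolding U_def by (simp add: D_cscale_ii mult_cscale_right cscale_add_right)

lemma U_mult_h: "U (h * x) = h * U x"
  unfolding U_def by (simp add: D_mult_h mult_cscale_right distrib_left mult.assoc)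

lemma U_zero: "U 0 = 0"
  using U_scaleR[of 0 0] by simp

text \<open>\<open>(hw + idw)\<^sup>*(hw + idw) = w\<^sup>*(h\<^sup>2 + d\<^sup>2)w\<close>, the cross terms cancelling
  because \<open>h\<close> and \<open>d\<close> are commuting self-adjoint elements.\<close>

lemma norm_U: "norm (U w) = norm w"
proof -
  let ?a = "h * w" and ?b = "D w"
  have cb: "cstar ?b = cstar w - cstar w * s"
    unfolding D_def by (simp add: cstar_diff cstar_mult s_selfadjoint)
  have ca: "cstar ?a = cstar w * h"
    by (simp add: cstar_mult h_selfadjoint)
  have "cstar (U w) * U w = (cstar ?a - cscale \<i> (cstar ?b)) * (?a + cscale \<i> ?b)"
    unfolding U_def by (simp add: cstar_add cstar_cscale_ii)
  also have "\<dots> = (cstar ?a * ?a + cstar ?b * ?b) + cscale \<i> (cstar ?a * ?b - cstar ?b * ?a)"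
    by (simp add: algebra_simps mult_cscale_left mult_cscale_right cscale_ii_ii
        cscale_diff_right cscale_add_right)
  also have "cstar ?a * ?b - cstar ?b * ?a = 0"
  proof -
    have "cstar ?a * ?b = cstar w * h * w - cstar w * (h * s) * w"
      unfolding ca D_def by (simp add: algebra_simps)
    moreover have "cstar ?b * ?a = cstar w * h * w - cstar w * (s * h) * w"
      unfolding cb by (simp add: algebra_simps)
    ultimately show ?thesis by (simp add: s_commute)
  qed
  also have "cstar ?a * ?a + cstar ?b * ?b = cstar w * (h * (h * w) + D (D w))"
  proof -
    have "cstar ?b * ?b = (cstar w - cstar w * s) * (w - s * w)"
      unfolding cb unfolding D_def ..
    also have "\<dots> = cstar w * (w - s * w - s * w + (s * s) * w)"
      by (simp add: algebra_simps)
    also have "w - s * w - s * w + (s * s) * w = D (D w)"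
      unfolding D_def by (simp add: algebra_simps)
    finally show ?thesis
      unfolding ca by (simp add: mult.assoc distrib_left)
  qed
  finally have "cstar (U w) * U w = cstar w * w"
    by (simp add: h_sq_plus_D_sq)
  then have "(norm (U w))\<^sup>2 = (norm w)\<^sup>2"
    by (metis cstar_identity)
  then show ?thesis
    by simp
qed

lemma U_U: "U (U v) = h * (h * v) + 2 *\<^sub>R cscale \<i> (h * D v) - D (D v)"
proof -
  have "U (U v) = U (h * v) + cscale \<i> (U (D v))"
    unfolding U_def[of v] by (simp add: U_add U_cscale_ii)
  also have "U (h * v) = h * (h * v) + cscale \<i> (h * D v)"
    unfolding U_def by (simp add: D_mult_h)
  also have "U (D v) = h * D v + cscale \<i> (D (D v))"
    unfolding U_def ..
  finally show ?thesis
    by (simp add: cscale_add_right cscale_ii_ii scaleR_2 algebra_simps)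
qed

lemma U_U_plus: "U (U v) + v = 2 *\<^sub>R U (h * v)"
proof -
  have "U (U v) + v = (h * (h * v) + 2 *\<^sub>R cscale \<i> (h * D v) - D (D v)) + (h * (h * v) + D (D v))"
    by (simp only: U_U h_sq_plus_D_sq)
  also have "\<dots> = 2 *\<^sub>R (h * (h * v) + cscale \<i> (h * D v))"
    by (simp add: scaleR_2 algebra_simps)
  finally show ?thesis
    unfolding U_def by (simp add: D_mult_h)
qed

lemma U_U_minus: "U (U w) - w = 2 *\<^sub>R cscale \<i> (U (D w))"
proof -
  have "U (U w) - w = (h * (h * w) + 2 *\<^sub>R cscale \<i> (h * D w) - D (D w)) - (h * (h * w) + D (D w))"
    by (simp only: U_U h_sq_plus_D_sq)
  also have "\<dots> = 2 *\<^sub>R (cscale \<i> (h * D w) - D (D w))"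
    by (simp add: scaleR_2 algebra_simps)
  finally show ?thesis
    unfolding U_def[of "D w"] by (simp add: cscale_add_right cscale_ii_ii)
qed

lemma norm_U_iter: "norm ((U ^^ k) z) = norm z"
  by (induction k) (simp_all add: norm_U)

lemma U_iter_mult_h: "(U ^^ k) (h * z) = h * (U ^^ k) z"
  by (induction k) (simp_all add: U_mult_h)

lemma Qiter_U_eq_power_D:
  "Qiter U n w = (2 ^ Suc n) *\<^sub>R cscale \<i> ((U ^^ Suc n) (((*) h ^^ n) (D w)))"
proof (induction n)
  case (Suc n)
  let ?X = "(U ^^ Suc n) (((*) h ^^ n) (D w))" and ?c = "(2::real) ^ Suc n"
  have "Qiter U (Suc n) w = 2 *\<^sub>R U (h * Qiter U n w)"
    by (simp add: U_U_plus)
  also have "h * Qiter U n w = ?c *\<^sub>R cscale \<i> (h * ?X)"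
    unfolding Suc by (simp add: mult_cscale_right)
  also have "h * ?X = (U ^^ Suc n) (((*) h ^^ Suc n) (D w))"
    using U_iter_mult_h[of "Suc n" "((*) h ^^ n) (D w)"] by simp
  finally show ?case
    by (simp add: U_scaleR U_cscale_ii)
qed (simp add: U_U_minus)

definition V :: "'a \<Rightarrow> 'a" where "V x = U (U x)"

lemma V_sum: "V (\<Sum>j\<in>A. f j) = (\<Sum>j\<in>A. V (f j))"
  by (induction A rule: infinite_finite_induct) (simp_all add: V_def U_zero U_add)

lemma V_scaleR: "V (r *\<^sub>R x) = r *\<^sub>R V x"
  by (simp add: V_def U_scaleR)

lemma norm_V_iter: "norm ((V ^^ k) z) = norm z"
  by (induction k) (simp_all add: V_def norm_U)

lemma Qiter_U_eq_sum: "Qiter U n w = (\<Sum>j\<le>Suc n. Qcoeff n j *\<^sub>R (V ^^ j) w)"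
proof (induction n)
  case (Suc n)
  let ?f = "\<lambda>j. Qcoeff n j *\<^sub>R (V ^^ j) w"
  let ?g = "\<lambda>j. Qcoeff n j *\<^sub>R (V ^^ Suc j) w"
  have V_Qiter: "V (Qiter U n w) = (\<Sum>j\<le>Suc n. ?g j)"
    unfolding Suc V_sum by (simp only: V_scaleR funpow.simps comp_def)
  have "Qiter U n w = ?f 0 + (\<Sum>j\<le>n. ?f (Suc j))"
    unfolding Suc by (rule sum.atMost_Suc_shift)
  also have "(\<Sum>j\<le>n. ?f (Suc j)) = (\<Sum>j\<le>Suc n. ?f (Suc j))"
    using Qcoeff_eq_0[of n "Suc (Suc n)"] by simp
  finally have Qiter_shift: "Qiter U n w = ?f 0 + (\<Sum>j\<le>Suc n. ?f (Suc j))" .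
  have "Qiter U (Suc n) w = V (Qiter U n w) + Qiter U n w"
    by (simp add: V_def)
  also have "\<dots> = ?f 0 + ((\<Sum>j\<le>Suc n. ?g j) + (\<Sum>j\<le>Suc n. ?f (Suc j)))"
    unfolding V_Qiter by (subst Qiter_shift) (simp only: add_ac)
  also have "(\<Sum>j\<le>Suc n. ?g j) + (\<Sum>j\<le>Suc n. ?f (Suc j))
      = (\<Sum>j\<le>Suc n. Qcoeff (Suc n) (Suc j) *\<^sub>R (V ^^ Suc j) w)"
    by (simp only: sum.distrib[symmetric] Qcoeff_Suc_Suc scaleR_add_left)
  also have "?f 0 + \<dots> = (\<Sum>j\<le>Suc (Suc n). Qcoeff (Suc n) j *\<^sub>R (V ^^ j) w)"
    by (simp only: sum.atMost_Suc_shift[of _ "Suc n"]) simp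
  finally show ?case .
qed (simp add: V_def)

lemma norm_power_D_le:
  "norm (((*) h ^^ n) (D w)) \<le> real (n choose (n div 2)) / 2 ^ n * norm w"
proof -
  have "norm (Qiter U n w) \<le> (\<Sum>j\<le>Suc n. norm (Qcoeff n j *\<^sub>R (V ^^ j) w))"
    unfolding Qiter_U_eq_sum by (rule norm_sum)
  also have "\<dots> = (\<Sum>j\<le>Suc n. \<bar>Qcoeff n j\<bar>) * norm w"
    by (simp only: norm_scaleR norm_V_iter real_norm_def sum_distrib_right)
  also have "\<dots> = 2 * real (n choose (n div 2)) * norm w"
    by (simp only: sum_abs_Qcoeff)
  finally show ?thesis
    by (simp add: Qiter_U_eq_power_D norm_cscale norm_U norm_U_iter field_simps)
qed

end

section \<open>Almost orthogonal self-adjoint elements\<close>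

lemma norm_mult_spow_le:
  fixes x y :: "'a::real_normed_algebra"
  assumes xy: "norm (x * y) \<le> e" and ny: "norm y \<le> 1"
  shows "norm (x * spow y n) \<le> e"
proof (cases n)
  case (Suc k)
  have "norm (x * spow y n) = norm ((x * y) * spow y k)"
    using Suc by (simp add: mult.assoc)
  also have "\<dots> \<le> norm (x * y) * norm (spow y k)"
    by (rule norm_mult_ineq)
  also have "\<dots> \<le> norm (x * y)"
    using norm_spow_le_1[OF ny, of k] by (simp add: mult_left_le)
  finally show ?thesis using xy by simp
qed (use xy in simp)

lemma norm_spow_comb_approx:
  fixes x y :: "'a::real_normed_algebra"
  assumes com: "x * y = y * x" and nx: "norm x \<le> 1" and ny: "norm y \<le> 1"
    and xy: "norm (x * y) \<le> e" and A: "0 \<le> A" and B: "0 \<le> B"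
  shows "norm (spow (A *\<^sub>R x + B *\<^sub>R y) n - (A ^ Suc n *\<^sub>R spow x n + B ^ Suc n *\<^sub>R spow y n))
           \<le> 2 * real n * e * (A + B) ^ Suc n"
proof (induction n)
  case (Suc n)
  let ?z = "A *\<^sub>R x + B *\<^sub>R y" and ?S = "A + B"
  let ?E = "spow ?z n - (A ^ Suc n *\<^sub>R spow x n + B ^ Suc n *\<^sub>R spow y n)"
  let ?c1 = "(A * B ^ Suc n) *\<^sub>R (x * spow y n)" and ?c2 = "(B * A ^ Suc n) *\<^sub>R (y * spow x n)"
  have "spow ?z (Suc n) - (A ^ Suc (Suc n) *\<^sub>R spow x (Suc n) + B ^ Suc (Suc n) *\<^sub>R spow y (Suc n))
      = ?c1 + ?c2 + ?z * ?E"
    by (simp add: algebra_simps)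
  also have "norm \<dots> \<le> A * B ^ Suc n * e + B * A ^ Suc n * e + ?S * (2 * real n * e * ?S ^ Suc n)"
  proof -
    have "norm ?c1 \<le> A * B ^ Suc n * e"
      using norm_mult_spow_le[OF xy ny, of n] A B by (simp add: mult_left_mono)
    moreover have "norm ?c2 \<le> B * A ^ Suc n * e"
      using norm_mult_spow_le[of y x e n] xy com nx A B by (simp add: mult_left_mono)
    moreover have "norm (?z * ?E) \<le> ?S * (2 * real n * e * ?S ^ Suc n)"
    proof -
      have "norm (A *\<^sub>R x) \<le> A" and "norm (B *\<^sub>R y) \<le> B"
        using A B nx ny by (simp_all add: mult_left_le)
      then have "norm ?z \<le> ?S"
        using norm_triangle_ineq[of "A *\<^sub>R x" "B *\<^sub>R y"] by linarith
      then have "norm ?z * norm ?E \<le> ?S * (2 * real n * e * ?S ^ Suc n)"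
        using Suc A B by (intro mult_mono) auto
      then show ?thesis
        using norm_mult_ineq[of ?z ?E] by linarith
    qed
    ultimately show ?thesis
      using norm_triangle_ineq[of "?c1 + ?c2" "?z * ?E"] norm_triangle_ineq[of ?c1 ?c2] by linarith
  qed
  also have "\<dots> \<le> 2 * real (Suc n) * e * ?S ^ Suc (Suc n)"
  proof -
    have "A * B ^ Suc n \<le> ?S * ?S ^ Suc n" and "B * A ^ Suc n \<le> ?S * ?S ^ Suc n"
      using A B by (intro mult_mono power_mono; simp)+
    moreover have "e \<ge> 0"
      using xy norm_ge_zero order_trans by blast
    ultimately have "(A * B ^ Suc n + B * A ^ Suc n) * e \<le> (2 * ?S ^ Suc (Suc n)) * e"
      by (intro mult_right_mono) simp_all
    then show ?thesis by (simp add: algebra_simps)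
  qed
  finally show ?case .
qed simp

text \<open>Passing to the 16th power, where the cross terms are negligible, and using
  \<open>\<parallel>z\<^sup>1\<^sup>6\<parallel> = \<parallel>z\<parallel>\<^sup>1\<^sup>6\<close> for self-adjoint \<open>z\<close>.\<close>

lemma norm_nonneg_comb_le:
  fixes x y :: "'a::cstar_algebra"
  assumes sx: "cstar x = x" and sy: "cstar y = y"
    and com: "x * y = y * x" and nx: "norm x \<le> 1" and ny: "norm y \<le> 1"
    and xy: "norm (x * y) \<le> 1/1000000" and A: "0 \<le> A" and B: "0 \<le> B"
    and Am: "A \<le> m" and Bm: "B \<le> m"
  shows "norm (A *\<^sub>R x + B *\<^sub>R y) \<le> (11/10) * m"
proof -
  let ?z = "A *\<^sub>R x + B *\<^sub>R y" and ?p = "A ^ 16 *\<^sub>R spow x 15" and ?q = "B ^ 16 *\<^sub>R spow y 15"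
  have m0: "0 \<le> m" using A Am by simp
  have approx: "norm (spow ?z 15 - (?p + ?q)) \<le> 2 * 15 * (1/1000000) * (A + B) ^ 16"
    using norm_spow_comb_approx[OF com nx ny xy A B, of 15] by simp
  have "norm ?p \<le> A ^ 16" and "norm ?q \<le> B ^ 16"
    using A B norm_spow_le_1[OF nx, of 15] norm_spow_le_1[OF ny, of 15] by (simp_all add: mult_left_le)
  moreover have "A ^ 16 \<le> m ^ 16" and "B ^ 16 \<le> m ^ 16"
    using A B Am Bm by (simp_all add: power_mono)
  moreover have "(A + B) ^ 16 \<le> 65536 * m ^ 16"
    using power_mono[of "A + B" "2 * m" 16] A B Am Bm by (simp add: power_mult_distrib)
  ultimately have "norm (spow ?z 15) \<le> 2 * m ^ 16 + 2 * 15 * (1/1000000) * (65536 * m ^ 16)"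
    using approx norm_triangle_ineq[of ?p ?q] norm_triangle_ineq[of "?p + ?q" "spow ?z 15 - (?p + ?q)"]
    by simp
  also have "\<dots> = (2 + 2 * 15 * (1/1000000) * 65536) * m ^ 16"
    by (simp add: algebra_simps)
  also have "\<dots> \<le> (11/10) ^ 16 * m ^ 16"
    by (rule mult_right_mono) (simp_all add: power_divide m0)
  also have "\<dots> = ((11/10) * m) ^ 16"
    by (simp only: power_mult_distrib)
  finally have "norm ?z ^ 16 \<le> ((11/10) * m) ^ 16"
    using norm_spow_selfadjoint_pow2[of ?z 4] by (simp add: cstar_add cstar_scaleR sx sy)
  then show ?thesis
    using m0 power_le_imp_le_base[of "norm ?z" 15 "(11/10) * m"] by simp
qed

lemma cstar_comb_mult_comb:
  fixes x y :: "'a::cstar_algebra"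
  assumes sx: "cstar x = x" and sy: "cstar y = y" and com: "x * y = y * x"
  shows "cstar (cscale \<alpha> x + cscale \<beta> y) * (cscale \<alpha> x + cscale \<beta> y)
     = (cmod \<alpha>)\<^sup>2 *\<^sub>R (x * x) + (cmod \<beta>)\<^sup>2 *\<^sub>R (y * y) + (2 * Re (cnj \<alpha> * \<beta>)) *\<^sub>R (x * y)"
proof -
  have a: "cnj \<alpha> * \<alpha> = complex_of_real ((cmod \<alpha>)\<^sup>2)" and b: "cnj \<beta> * \<beta> = complex_of_real ((cmod \<beta>)\<^sup>2)"
    by (simp_all only: mult.commute[of "cnj _"] complex_norm_square[symmetric])
  have c: "cnj \<alpha> * \<beta> + cnj \<beta> * \<alpha> = complex_of_real (2 * Re (cnj \<alpha> * \<beta>))"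
    using complex_add_cnj[of "cnj \<alpha> * \<beta>"] by (simp add: mult.commute)
  have "cstar (cscale \<alpha> x + cscale \<beta> y) * (cscale \<alpha> x + cscale \<beta> y)
      = (cscale (cnj \<alpha>) x + cscale (cnj \<beta>) y) * (cscale \<alpha> x + cscale \<beta> y)"
    by (simp add: cstar_add cstar_cscale sx sy)
  also have "\<dots> = cscale (cnj \<alpha> * \<alpha>) (x * x) + cscale (cnj \<beta> * \<beta>) (y * y)
       + (cscale (cnj \<alpha> * \<beta>) (x * y) + cscale (cnj \<beta> * \<alpha>) (x * y))"
    by (simp only: distrib_left distrib_right cscale_mult_cscale com[symmetric] add_ac)
  also have "cscale (cnj \<alpha> * \<beta>) (x * y) + cscale (cnj \<beta> * \<alpha>) (x * y)
      = cscale (cnj \<alpha> * \<beta> + cnj \<beta> * \<alpha>) (x * y)"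
    by (rule cscale_add_left[symmetric])
  finally show ?thesis
    unfolding a b c by (simp only: cscale_of_real)
qed

text \<open>By the C*-identity, \<open>\<parallel>\<alpha>x + \<beta>y\<parallel>\<^sup>2 = \<parallel>|\<alpha>|\<^sup>2x\<^sup>2 + |\<beta>|\<^sup>2y\<^sup>2 + 2Re(\<alpha>\<^sup>*\<beta>)xy\<parallel>\<close>.\<close>

lemma norm_comb_le:
  fixes x y :: "'a::cstar_algebra"
  assumes sx: "cstar x = x" and sy: "cstar y = y" and com: "x * y = y * x"
    and nx: "norm x \<le> 1" and ny: "norm y \<le> 1" and xy: "norm (x * y) \<le> 1/1000000"
    and \<alpha>M: "cmod \<alpha> \<le> M" and \<beta>M: "cmod \<beta> \<le> M"
  shows "norm (cscale \<alpha> x + cscale \<beta> y) \<le> (21/20) * M"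
proof -
  let ?z = "cscale \<alpha> x + cscale \<beta> y"
  let ?A = "(cmod \<alpha>)\<^sup>2" and ?B = "(cmod \<beta>)\<^sup>2" and ?C = "2 * Re (cnj \<alpha> * \<beta>)"
  have M0: "0 \<le> M" using \<alpha>M norm_ge_zero order_trans by blast
  have "norm ((x * x) * (y * y)) = norm ((x * (x * y)) * y)"
    by (simp add: mult.assoc)
  also have "\<dots> \<le> norm x * norm (x * y) * norm y"
    using norm_mult_ineq[of "x * (x * y)" y] norm_mult_ineq[of x "x * y"]
    by (meson mult_right_mono norm_ge_zero order_trans)
  also have "\<dots> \<le> 1 * (1/1000000) * 1"
    using nx ny xy by (intro mult_mono) auto
  finally have sq_small: "norm ((x * x) * (y * y)) \<le> 1/1000000"
    by simp
  have "norm (?A *\<^sub>R (x * x) + ?B *\<^sub>R (y * y)) \<le> (11/10) * M\<^sup>2"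
  proof (rule norm_nonneg_comb_le[OF _ _ _ _ _ sq_small])
    show "(x * x) * (y * y) = (y * y) * (x * x)" by (metis com mult.assoc)
    show "norm (x * x) \<le> 1" and "norm (y * y) \<le> 1"
      using norm_mult_self_selfadjoint[OF sx] norm_mult_self_selfadjoint[OF sy] nx ny
      by (simp_all add: power_le_one)
    show "?A \<le> M\<^sup>2" and "?B \<le> M\<^sup>2"
      using \<alpha>M \<beta>M by (simp_all add: power_mono)
  qed (simp_all add: cstar_mult sx sy)
  moreover have "\<bar>?C\<bar> \<le> 2 * M\<^sup>2"
  proof -
    have "\<bar>Re (cnj \<alpha> * \<beta>)\<bar> \<le> cmod \<alpha> * cmod \<beta>"
      using abs_Re_le_cmod[of "cnj \<alpha> * \<beta>"] by (simp add: norm_mult)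
    also have "\<dots> \<le> M * M" using \<alpha>M \<beta>M M0 by (intro mult_mono) auto
    finally show ?thesis by (simp add: power2_eq_square)
  qed
  ultimately have "norm (cstar ?z * ?z) \<le> (11/10) * M\<^sup>2 + 2 * M\<^sup>2 * (1/1000000)"
    unfolding cstar_comb_mult_comb[OF sx sy com]
    using norm_triangle_ineq[of "?A *\<^sub>R (x * x) + ?B *\<^sub>R (y * y)" "?C *\<^sub>R (x * y)"] xy
      mult_mono[of "\<bar>?C\<bar>" "2 * M\<^sup>2" "norm (x * y)" "1/1000000"]
    by simp
  also have "\<dots> = (11/10 + 2/1000000) * M\<^sup>2"
    by (simp add: algebra_simps)
  also have "\<dots> \<le> (21/20)\<^sup>2 * M\<^sup>2"
    by (rule mult_right_mono) (simp_all add: power_divide)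
  also have "\<dots> = ((21/20) * M)\<^sup>2"
    by (simp only: power_mult_distrib)
  finally show ?thesis
    using M0 by (simp add: cstar_identity power2_le_iff_abs_le)
qed

lemma norm_comb_ge:
  fixes x y :: "'a::cstar_algebra"
  assumes sx: "cstar x = x" and nx: "norm x = 1" and xy: "norm (x * y) \<le> e"
  shows "cmod \<alpha> - cmod \<beta> * e \<le> norm (cscale \<alpha> x + cscale \<beta> y)"
proof -
  let ?z = "cscale \<alpha> x + cscale \<beta> y"
  have "x * ?z = cscale \<alpha> (x * x) + cscale \<beta> (x * y)"
    by (simp add: distrib_left mult_cscale_right)
  moreover have "norm (cscale \<alpha> (x * x)) = cmod \<alpha>"
    using norm_mult_self_selfadjoint[OF sx] nx by (simp add: norm_cscale)
  moreover have "norm (cscale \<beta> (x * y)) \<le> cmod \<beta> * e"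
    using xy by (simp add: norm_cscale mult_left_mono)
  ultimately have "cmod \<alpha> - cmod \<beta> * e \<le> norm (x * ?z)"
    by (metis diff_le_eq order_trans add_le_cancel_left norm_diff_ineq)
  also have "\<dots> \<le> norm ?z"
    using norm_mult_ineq[of x ?z] nx by simp
  finally show ?thesis .
qed

lemma exists_min_norm_on_line:
  fixes a b :: "'a::cstar_algebra"
  assumes b: "b \<noteq> 0"
  shows "\<exists>l. \<forall>\<mu>. norm (a + cscale l b) \<le> norm (a + cscale \<mu> b)"
proof -
  let ?f = "\<lambda>\<mu>. norm (a + cscale \<mu> b)" and ?R = "2 * norm a / norm b"
  have nb: "norm b > 0" using b by simp
  have "continuous_on (cball 0 ?R) ?f"
    by (intro continuous_intros bounded_linear.continuous_on[OF bounded_linear_cscale_left])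
  moreover have "0 \<in> cball 0 ?R" using nb by simp
  ultimately obtain l where mn: "\<forall>\<mu>\<in>cball 0 ?R. ?f l \<le> ?f \<mu>"
    using continuous_attains_inf[OF compact_cball] by blast
  have "?f l \<le> ?f \<mu>" for \<mu>
  proof (cases "\<mu> \<in> cball 0 ?R")
    case False
    then have "?R * norm b < cmod \<mu> * norm b"
      using nb by (intro mult_strict_right_mono) auto
    then have "norm a \<le> cmod \<mu> * norm b - norm a"
      using nb by simp
    also have "\<dots> \<le> ?f \<mu>"
      using norm_triangle_ineq2[of "cscale \<mu> b" "- a"] by (simp add: norm_cscale add.commute)
    finally show ?thesis
      using mn \<open>0 \<in> cball 0 ?R\<close> by fastforce
  qed (use mn in blast)
  then show ?thesis by blast
qed

text \<open>The point of the line \<open>a + \<complex>b\<close> nearest to \<open>0\<close> is Birkhoff--James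
  orthogonal to \<open>b\<close>.\<close>

lemma exists_bj_orth_on_line:
  fixes a b :: "'a::cstar_algebra"
  assumes "b \<noteq> 0"
  shows "\<exists>l. norm (a + cscale l b) \<le> norm a \<and> bj_orth (a + cscale l b) b"
proof -
  obtain l where l: "\<And>\<mu>. norm (a + cscale l b) \<le> norm (a + cscale \<mu> b)"
    using exists_min_norm_on_line[OF assms] by blast
  have "norm (a + cscale l b) \<le> norm (a + cscale l b + cscale m b)" for m
    using l[of "l + m"] by (simp add: cscale_add_left add.assoc)
  then have "bj_orth (a + cscale l b) b"
    unfolding bj_orth_def by blast
  with l[of 0] show ?thesis by auto
qed

text \<open>The identity \<open>3|1 + l|\<^sup>2 + |1 - 3l|\<^sup>2 = 4 + 12|l|\<^sup>2\<close> does the work.\<close>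

lemma cmod_le_one_fifth:
  fixes l :: complex
  assumes h1: "cmod (1 - 3 * l) - cmod (1 + l) / 1000000 \<le> 21/20"
    and h2: "cmod (1 + l) - cmod (1 - 3 * l) / 1000000 \<le> 21/20"
  shows "cmod l \<le> 1/5"
proof -
  let ?p = "cmod (1 + l)" and ?q = "cmod (1 - 3 * l)" and ?L = "cmod l"
  have pL: "?p \<le> 1 + ?L" using norm_triangle_ineq[of 1 l] by simp
  have qL: "?q \<le> 1 + 3 * ?L" using norm_triangle_ineq4[of 1 "3 * l"] by (simp add: norm_mult)
  have Lp: "?L \<le> ?p + 1" using norm_triangle_ineq4[of "1 + l" 1] by simp
  have L2: "?L \<le> 21/10" using h2 Lp qL by simp
  have "?p \<le> 10501/10000" and "?q \<le> 10501/10000" using h1 h2 pL qL L2 by simp_all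
  then have "?p\<^sup>2 \<le> (10501/10000)\<^sup>2" and "?q\<^sup>2 \<le> (10501/10000)\<^sup>2"
    by (simp_all add: power_mono)
  moreover have "3 * ?p\<^sup>2 + ?q\<^sup>2 = 4 + 12 * ?L\<^sup>2"
    unfolding cmod_power2 by (simp add: power2_eq_square algebra_simps)
  ultimately have "?L\<^sup>2 \<le> (1/5)\<^sup>2"
    by (simp add: power2_eq_square)
  then show ?thesis
    by (simp add: power2_le_iff_abs_le)
qed

text \<open>For \<open>a = x + y\<close> and \<open>b = y - 3x\<close>, the norm of \<open>\<alpha>x + \<beta>y\<close> is almost
  \<open>max |\<alpha>| |\<beta>|\<close>, so the BJ-orthogonal point \<open>a + lb\<close> of the line has
  \<open>\<parallel>a + (l + 1)b\<parallel> < \<parallel>b\<parallel>\<close>.\<close>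

lemma no_almost_orthogonal_pair:
  fixes x y :: "'a::cstar_algebra"
  assumes bj: "\<forall>a b::'a. bj_orth a b \<longrightarrow> norm (a + b) \<ge> norm b"
    and sx: "cstar x = x" and sy: "cstar y = y" and com: "x * y = y * x"
    and nx: "norm x = 1" and ny: "norm y = 1" and xy: "norm (x * y) \<le> 1/1000000"
  shows False
proof -
  define a where "a = cscale 1 x + cscale 1 y"
  define b where "b = cscale (-3) x + cscale 1 y"
  have line: "a + cscale \<mu> b = cscale (1 - 3 * \<mu>) x + cscale (1 + \<mu>) y" for \<mu>
  proof -
    have "1 - 3 * \<mu> = 1 + \<mu> * (-3)" and "1 + \<mu> = 1 + \<mu> * 1" by simp_all
    then show ?thesis
      unfolding a_def b_def by (simp only: cscale_add_right cscale_add_left cscale_cscale add_ac)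
  qed
  have nb: "3 - 1/1000000 \<le> norm b"
    using norm_comb_ge[OF sx nx xy, of "-3" 1] unfolding b_def by simp
  then obtain l where l_min: "norm (a + cscale l b) \<le> norm a"
    and l_orth: "bj_orth (a + cscale l b) b"
    using exists_bj_orth_on_line[of b a] by force
  have "norm (a + cscale l b) \<le> 21/20"
    using l_min norm_comb_le[OF sx sy com, of 1 1 1] nx ny xy unfolding a_def by simp
  then have "norm (cscale (1 - 3 * l) x + cscale (1 + l) y) \<le> 21/20"
    by (simp add: line)
  then have "cmod l \<le> 1/5"
    using norm_comb_ge[OF sx nx xy, of "1 - 3 * l" "1 + l"]
      norm_comb_ge[OF sy ny, of x "1/1000000" "1 + l" "1 - 3 * l"] xy com
    by (intro cmod_le_one_fifth) (simp_all add: add.commute)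
  have "norm b \<le> norm (a + cscale l b + b)"
    using bj l_orth by blast
  also have "a + cscale l b + b = cscale (- (2 + 3 * l)) x + cscale (2 + l) y"
    using line[of "l + 1"] by (simp add: cscale_add_left cscale_one algebra_simps)
  also have "norm \<dots> \<le> (21/20) * (2 + 3 * cmod l)"
  proof (rule norm_comb_le[OF sx sy com])
    show "cmod (- (2 + 3 * l)) \<le> 2 + 3 * cmod l"
      using norm_triangle_ineq[of 2 "3 * l"] by (simp only: norm_minus_cancel) (simp add: norm_mult)
    have "cmod (2 + l) \<le> 2 + cmod l"
      using norm_triangle_ineq[of 2 l] by simp
    then show "cmod (2 + l) \<le> 2 + 3 * cmod l"
      using norm_ge_zero[of l] by linarith
  qed (use nx ny xy in simp_all)
  finally show False
    using nb \<open>cmod l \<le> 1/5\<close> by simp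
qed

section \<open>Self-adjoint elements are multiples of one projection\<close>

lemma (in sqrt_compl) D_h_eq_0:
  assumes bj: "\<forall>a b::'a. bj_orth a b \<longrightarrow> norm (a + b) \<ge> norm b"
    and nh: "norm h = 1"
  shows "D h = 0"
proof (rule ccontr)
  assume "D h \<noteq> 0"
  then have d: "norm (D h) > 0" by simp
  obtain K where K1: "K \<ge> 1" and K: "real ((2*K) choose K) / 4 ^ K < norm (D h) / 1000000"
    using central_binomial_div_4_power_small[of "norm (D h) / 1000000"] d by auto
  define x where "x = spow h (2*K - 1)"
  define y where "y = (1 / norm (D h)) *\<^sub>R D h"
  have D_h: "D h = h - s * h" unfolding D_def ..
  have xs: "x * s = s * x" and xh: "x * h = h * x"
    unfolding x_def using spow_commute[of s h] spow_commute[of h h] s_commute by simp_all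
  have "x * D h = x * h - (x * s) * h"
    unfolding D_h by (simp add: right_diff_distrib mult.assoc)
  also have "\<dots> = h * x - s * (x * h)"
    by (simp add: xs xh mult.assoc)
  finally have "x * D h = D h * x"
    unfolding D_h by (simp add: xh left_diff_distrib mult.assoc)
  then have com: "x * y = y * x"
    unfolding y_def by simp
  have "x * D h = ((*) h ^^ (2*K)) (D h)"
    unfolding x_def spow_eq_funpow using K1 by simp
  then have "norm (x * D h) \<le> real ((2*K) choose K) / 4 ^ K"
    using norm_power_D_le[of "2*K" h] nh by (simp add: power_mult)
  then have "norm (x * D h) < norm (D h) / 1000000"
    using K by linarith
  then have "norm (x * y) \<le> 1/1000000"
    unfolding y_def using d by (simp add: divide_simps)
  moreover have "cstar x = x" and "norm x = 1"
    unfolding x_def using cstar_spow norm_spow_selfadjoint h_selfadjoint nh by simp_all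
  moreover have "cstar y = y"
    unfolding y_def D_h by (simp add: cstar_scaleR cstar_diff cstar_mult h_selfadjoint s_selfadjoint s_commute)
  moreover have "norm y = 1"
    unfolding y_def using d by simp
  ultimately show False
    using no_almost_orthogonal_pair[OF bj _ _ com] by blast
qed

text \<open>With \<open>h\<^sup>3 = h\<close>, the elements \<open>(h\<^sup>2 \<plusminus> h)/2\<close> are self-adjoint with vanishing
  products, so one of them must vanish.\<close>

lemma selfadjoint_square_eq:
  fixes h :: "'a::cstar_algebra"
  assumes bj: "\<forall>a b::'a. bj_orth a b \<longrightarrow> norm (a + b) \<ge> norm b"
    and sa: "cstar h = h" and nh: "norm h = 1"
  shows "h * h = h \<or> h * h = - h"
proof -
  obtain s where s: "s + s = h * h + s * s" "cstar s = s" "s * h = h * s"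
    using sqrt_compl_exists[OF sa] nh by auto
  interpret sqrt_compl h s
    using sa s by unfold_locales
  have sh: "s * h = h"
    using D_h_eq_0[OF bj nh] unfolding D_def by simp
  have "(s + s) * h = (h * h + s * s) * h"
    by (simp only: s(1))
  then have hhh: "h * (h * h) = h"
    by (simp add: distrib_right sh mult.assoc)
  define p where "p = (1/2) *\<^sub>R (h * h + h)"
  define q where "q = (1/2) *\<^sub>R (h * h - h)"
  have pq: "p * q = 0" and qp: "q * p = 0"
    unfolding p_def q_def by (simp_all add: algebra_simps hhh)
  have "p = 0 \<or> q = 0"
  proof (rule ccontr)
    assume "\<not> (p = 0 \<or> q = 0)"
    then have np: "norm p > 0" and nq: "norm q > 0" by auto
    define x where "x = (1 / norm p) *\<^sub>R p"
    define y where "y = (1 / norm q) *\<^sub>R q"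
    have "x * y = 0" and "y * x = 0"
      unfolding x_def y_def by (simp_all add: pq qp)
    moreover have "cstar x = x" and "cstar y = y"
      unfolding x_def y_def p_def q_def by (simp_all add: cstar_scaleR cstar_add cstar_diff cstar_mult sa)
    moreover have "norm x = 1" and "norm y = 1"
      unfolding x_def y_def using np nq by simp_all
    ultimately show False
      using no_almost_orthogonal_pair[OF bj, of x y] by simp
  qed
  then show ?thesis
  proof
    assume "p = 0"
    then have "h * h + h = 0" unfolding p_def by simp
    then show ?thesis by (simp add: eq_neg_iff_add_eq_0)
  next
    assume "q = 0"
    then show ?thesis unfolding q_def by simp
  qed
qed

lemma selfadjoint_eq_scaleR_projection:
  fixes k :: "'a::cstar_algebra"
  assumes bj: "\<forall>a b::'a. bj_orth a b \<longrightarrow> norm (a + b) \<ge> norm b"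
    and sa: "cstar k = k"
  shows "\<exists>c e. e * e = e \<and> cstar e = e \<and> k = c *\<^sub>R e"
proof (cases "k = 0")
  case True
  then show ?thesis by (intro exI[of _ 0] exI[of _ 0]) simp
next
  case False
  define h where "h = (1 / norm k) *\<^sub>R k"
  have hsa: "cstar h = h" and nh: "norm h = 1" and kh: "k = norm k *\<^sub>R h"
    unfolding h_def using False by (simp_all add: cstar_scaleR sa)
  from selfadjoint_square_eq[OF bj hsa nh] show ?thesis
  proof
    assume "h * h = h"
    with hsa kh show ?thesis by blast
  next
    assume "h * h = - h"
    then have "(- h) * (- h) = - h" and "cstar (- h) = - h" and "k = (- norm k) *\<^sub>R (- h)"
      using kh by (simp_all add: cstar_minus hsa)
    then show ?thesis by blast
  qed
qed

lemma selfadjoint_square_eq_scaleR: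
  fixes w :: "'a::cstar_algebra"
  assumes bj: "\<forall>a b::'a. bj_orth a b \<longrightarrow> norm (a + b) \<ge> norm b"
    and sa: "cstar w = w"
  shows "\<exists>c. w * w = c *\<^sub>R w"
proof -
  obtain c e where "e * e = e" and "w = c *\<^sub>R e"
    using selfadjoint_eq_scaleR_projection[OF bj sa] by blast
  then have "w * w = c *\<^sub>R w" by simp
  then show ?thesis by blast
qed

text \<open>Writing \<open>(p \<plusminus> q)\<^sup>2 = \<alpha>\<^sub>\<plusminus>(p \<plusminus> q)\<close> and adding yields a linear relation
  between \<open>p\<close> and \<open>q\<close>; so either \<open>q = cp\<close> with \<open>c\<^sup>2 = c\<close>, or \<open>(p - q)\<^sup>2 = 0\<close>.\<close>

lemma projection_unique:
  fixes p q :: "'a::cstar_algebra"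
  assumes bj: "\<forall>a b::'a. bj_orth a b \<longrightarrow> norm (a + b) \<ge> norm b"
    and pp: "p * p = p" and ps: "cstar p = p" and qq: "q * q = q" and qs: "cstar q = q"
    and p0: "p \<noteq> 0" and q0: "q \<noteq> 0"
  shows "p = q"
proof -
  obtain \<alpha> where \<alpha>: "(p + q) * (p + q) = \<alpha> *\<^sub>R (p + q)"
    using selfadjoint_square_eq_scaleR[OF bj, of "p + q"] by (auto simp: cstar_add ps qs)
  obtain \<beta> where \<beta>: "(p - q) * (p - q) = \<beta> *\<^sub>R (p - q)"
    using selfadjoint_square_eq_scaleR[OF bj, of "p - q"] by (auto simp: cstar_diff ps qs)
  have "(p + q) * (p + q) + (p - q) * (p - q) = 2 *\<^sub>R p + 2 *\<^sub>R q"
    by (simp add: algebra_simps scaleR_2 pp qq)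
  then have lin: "(2 - \<alpha> + \<beta>) *\<^sub>R q = (\<alpha> + \<beta> - 2) *\<^sub>R p"
    unfolding \<alpha> \<beta> by (simp add: algebra_simps)
  show ?thesis
  proof (cases "2 - \<alpha> + \<beta> = 0")
    case False
    define c where "c = (\<alpha> + \<beta> - 2) / (2 - \<alpha> + \<beta>)"
    have "(2 - \<alpha> + \<beta>) *\<^sub>R q = (2 - \<alpha> + \<beta>) *\<^sub>R (c *\<^sub>R p)"
      using lin False unfolding c_def by simp
    then have qc: "q = c *\<^sub>R p"
      using False by (simp only: scaleR_cancel_left) simp
    then have "(c * c) *\<^sub>R p = c *\<^sub>R p"
      using qq pp by simp
    then have "c * (c - 1) = 0"
      using p0 by (simp add: algebra_simps)
    then have "c = 0 \<or> c = 1"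
      by simp
    with qc q0 show ?thesis by auto
  next
    case True
    then have "\<beta> = 0"
      using lin p0 by simp
    then have "norm (p - q) ^ 2 = 0"
      using \<beta> norm_mult_self_selfadjoint[of "p - q"] by (simp add: cstar_diff ps qs)
    then show ?thesis by simp
  qed
qed

lemma cartesian_decomposition:
  fixes x :: "'a::cstar_algebra"
  shows "\<exists>a b. cstar a = a \<and> cstar b = b \<and> x = a + cscale \<i> b"
proof (intro exI conjI)
  let ?a = "(1/2) *\<^sub>R (x + cstar x)" and ?b = "(1/2) *\<^sub>R cscale (- \<i>) (x - cstar x)"
  show "cstar ?a = ?a"
    by (simp add: cstar_scaleR cstar_add cstar_cstar add.commute)
  show "cstar ?b = ?b"
    by (simp add: cstar_scaleR cstar_cscale cstar_diff cstar_cstar cscale_diff_right cscale_minus_left)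
  have "cscale \<i> ?b = (1/2) *\<^sub>R x - (1/2) *\<^sub>R cstar x"
    by (simp add: cscale_scaleR cscale_cscale cscale_one scaleR_diff_right)
  then have "?a + cscale \<i> ?b = (1/2) *\<^sub>R (x + x)"
    by (simp add: algebra_simps)
  then show "x = ?a + cscale \<i> ?b"
    by (simp only: scaleR_half_double)
qed

lemma one_dimensional:
  fixes z :: "'a::cstar_algebra"
  assumes bj: "\<forall>a b::'a. bj_orth a b \<longrightarrow> norm (a + b) \<ge> norm b"
    and z: "z \<noteq> 0"
  shows "\<exists>e::'a. e * e = e \<and> cstar e = e \<and> e \<noteq> 0 \<and> (\<forall>x. \<exists>c. x = cscale c e)"
proof -
  have "norm (cstar z * z) \<noteq> 0"
    using z by (simp add: cstar_identity)
  moreover have "cstar (cstar z * z) = cstar z * z"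
    by (simp add: cstar_mult cstar_cstar)
  then obtain c e where e: "e * e = e" "cstar e = e" and ce: "cstar z * z = c *\<^sub>R e"
    using selfadjoint_eq_scaleR_projection[OF bj] by blast
  ultimately have e0: "e \<noteq> 0"
    by auto
  have real_multiple: "\<exists>r. w = r *\<^sub>R e" if sa: "cstar w = w" for w :: 'a
  proof (cases "w = 0")
    case False
    obtain r f where f: "f * f = f" "cstar f = f" and w: "w = r *\<^sub>R f"
      using selfadjoint_eq_scaleR_projection[OF bj sa] by blast
    have "f \<noteq> 0"
      using False w by auto
    then have "f = e"
      by (rule projection_unique[OF bj f e _ e0])
    with w show ?thesis by blast
  qed (intro exI[of _ 0], simp)
  have "\<exists>c. x = cscale c e" for x
  proof -
    obtain a b where a: "cstar a = a" and b: "cstar b = b" and x: "x = a + cscale \<i> b"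
      using cartesian_decomposition by blast
    obtain r t where "a = r *\<^sub>R e" and "b = t *\<^sub>R e"
      using real_multiple[OF a] real_multiple[OF b] by blast
    then have "x = cscale (complex_of_real r + \<i> * complex_of_real t) e"
      unfolding x by (simp add: scaleR_cscale cscale_cscale cscale_add_left)
    then show ?thesis by blast
  qed
  with e e0 show ?thesis by blast
qed

section \<open>The isomorphism with \<open>\<complex>\<close>\<close>

lemma star_iso_to_complex_if_spanned:
  fixes e :: "'a::cstar_algebra"
  assumes ee: "e * e = e" and es: "cstar e = e" and e0: "e \<noteq> 0"
    and span: "\<forall>x. \<exists>c. x = cscale c e"
  shows "\<exists>\<phi>::'a \<Rightarrow> complex. star_iso_to_complex \<phi>"
proof -
  have coeff_unique: "c = d" if "cscale c e = cscale d e" for c d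
  proof -
    have "cmod (c - d) * norm e = 0"
      using that by (metis cscale_diff_left norm_cscale norm_zero right_minus_eq)
    with e0 show ?thesis by simp
  qed
  define \<phi> where "\<phi> x = (THE c. x = cscale c e)" for x
  have \<phi>_cscale: "\<phi> (cscale c e) = c" for c
    unfolding \<phi>_def by (rule the_equality) (auto intro: coeff_unique)
  have expand: "x = cscale (\<phi> x) e" for x
    using span \<phi>_cscale by metis
  have "star_iso_to_complex \<phi>"
    unfolding star_iso_to_complex_def
  proof (intro conjI allI)
    show "bij \<phi>"
    proof (rule bijI)
      show "inj \<phi>" by (rule injI) (metis expand)
      show "surj \<phi>" by (rule surjI[of _ "\<lambda>c. cscale c e"]) (rule \<phi>_cscale)
    qed
  next
    fix x y
    have "x + y = cscale (\<phi> x + \<phi> y) e"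
      by (subst expand[of x], subst expand[of y]) (simp add: cscale_add_left)
    then show "\<phi> (x + y) = \<phi> x + \<phi> y"
      using \<phi>_cscale by metis
  next
    fix c x
    have "cscale c x = cscale (c * \<phi> x) e"
      by (subst expand[of x]) (simp add: cscale_cscale)
    then show "\<phi> (cscale c x) = c * \<phi> x"
      using \<phi>_cscale by metis
  next
    fix x y
    have "x * y = cscale (\<phi> x * \<phi> y) e"
      by (subst expand[of x], subst expand[of y]) (simp add: cscale_mult_cscale ee)
    then show "\<phi> (x * y) = \<phi> x * \<phi> y"
      using \<phi>_cscale by metis
  next
    fix x
    have "cstar x = cscale (cnj (\<phi> x)) e"
      by (subst expand[of x]) (simp add: cstar_cscale es)
    then show "\<phi> (cstar x) = cnj (\<phi> x)"
      using \<phi>_cscale by metis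
  qed
  then show ?thesis by blast
qed

lemma bj_property_if_star_iso_to_complex:
  fixes \<phi> :: "'a::cstar_algebra \<Rightarrow> complex"
  assumes iso: "star_iso_to_complex \<phi>"
  shows "\<forall>a b::'a. bj_orth a b \<longrightarrow> norm (a + b) \<ge> norm b"
proof (intro allI impI)
  fix a b :: 'a
  assume orth: "bj_orth a b"
  have bij: "bij \<phi>" and add: "\<And>x y. \<phi> (x + y) = \<phi> x + \<phi> y"
    and sc: "\<And>c x. \<phi> (cscale c x) = c * \<phi> x" and mu: "\<And>x y. \<phi> (x * y) = \<phi> x * \<phi> y"
    and st: "\<And>x. \<phi> (cstar x) = cnj (\<phi> x)"
    using iso unfolding star_iso_to_complex_def by auto
  obtain e where e1: "\<phi> e = 1"
    using bij by (metis bij_pointE)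
  have "\<phi> (cscale (\<phi> x) e) = \<phi> x" for x
    using sc e1 by simp
  then have expand: "x = cscale (\<phi> x) e" for x
    using injD[OF bij_is_inj[OF bij]] by metis
  have "\<phi> (cstar e * e) = \<phi> e"
    using mu st e1 by simp
  then have "cstar e * e = e"
    by (rule injD[OF bij_is_inj[OF bij]])
  moreover have "e \<noteq> 0"
    using e1 add[of 0 0] by auto
  ultimately have "norm e = 1"
    using cstar_identity[of e] by (simp add: power2_eq_square)
  then have norm_eq: "norm x = cmod (\<phi> x)" for x
    using expand[of x] by (metis mult.right_neutral norm_cscale)
  show "norm b \<le> norm (a + b)"
  proof (cases "\<phi> b = 0")
    case True
    then show ?thesis using expand[of b] by simp
  next
    case False
    have "norm a \<le> norm (a + cscale (- \<phi> a / \<phi> b) b)"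
      using orth unfolding bj_orth_def by blast
    also have "\<dots> = 0"
      using False by (simp add: norm_eq add sc)
    finally show ?thesis
      by simp
  qed
qed

theorem corollary4p3:
  assumes nontrivial: "\<exists>x::'a::cstar_algebra. x \<noteq> 0"
  shows "(\<forall>a b::'a. bj_orth a b \<longrightarrow> norm (a + b) \<ge> norm b)
     \<longleftrightarrow> (\<exists>\<phi>::'a \<Rightarrow> complex. star_iso_to_complex \<phi>)"
proof
  assume bj: "\<forall>a b::'a. bj_orth a b \<longrightarrow> norm (a + b) \<ge> norm b"
  obtain z :: 'a where "z \<noteq> 0"
    using nontrivial by blast
  then obtain e :: 'a where "e * e = e" "cstar e = e" "e \<noteq> 0" "\<forall>x. \<exists>c. x = cscale c e"
    using one_dimensional[OF bj] by blast
  then show "\<exists>\<phi>::'a \<Rightarrow> complex. star_iso_to_complex \<phi>"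
    by (rule star_iso_to_complex_if_spanned)
next
  assume "\<exists>\<phi>::'a \<Rightarrow> complex. star_iso_to_complex \<phi>"
  then show "\<forall>a b::'a. bj_orth a b \<longrightarrow> norm (a + b) \<ge> norm b"
    using bj_property_if_star_iso_to_complex by blast
qed

end
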